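(* Fix $b\in\mathbb{Z}^{V_+}_{\ge0}$. For every $\bar x\in\mathcal{X}$, $$\mathrm{FLOW}(\bar x)=\Big\{y\in[\mathbf 0,b]^N:\ y^\xi(S)\ge\frac{d^\xi(S)}{C}+\bar x(E(S))-|S|\ \ \forall\emptyset\ne S\subseteq V_+,\ \forall\xi\in[N]\Big\}.$$
   Context: $G=(V,E)$ complete undirected graph with $V=\{0\}\cup V_+$ ($0$ depot, $V_+$ customers); $D=(V,A)$ replaces each edge by two opposite arcs; $\delta^-(v)$, $\delta^+(v)$ are the arcs entering/leaving $v$. Capacity $C>0$; scenarios $\xi\in[N]$ with demands $d^\xi\in\mathbb{Q}^{V_+}_{\ge0}$, $d^\xi(v)\le C$, probabilities $p_\xi\ge0$ summing to $1$; $\bar d=\sum_\xi p_\xi d^\xi$. $f(S)=\sum_{i\in S}f(i)$; $\delta(S)$: edges with exactly one end in $S$; $E(S)$: edges with both ends in $S$. $\mathcal{X}$ is one of $\mathcal{X}_{\mathrm{sub}}=\{x\in[0,2]^E: x(\delta(v))=2\ \forall v\in V_+,\ x(E(S))\le|S|-1\ \forall\emptyset\ne S\subseteq V_+\}$ or $\mathcal{X}_{\mathrm{cvrp}}=\mathcal{X}_{\mathrm{sub}}\cap\{x:x(\delta(0))=2k,\ x(E(S))\le|S|-\lceil\bar d(S)/C\rceil\}$. $[\mathbf 0,b]^N=\{y\in\mathbb{R}^{[N]\times V_+}:0\le y^\xi_v\le b_v\}$. For $\bar x\in\mathcal{X}$, $\mathrm{FLOW}(\bar x)$ is the set of $y\in[\mathbf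 0,b]^N$ for which there exist $f\in\mathbb{R}^{[N]\times A}_{\ge0}$, $g\in\mathbb{R}^{[N]\times V_+}_{\ge0}$ with $f^\xi(\delta^-(v))+d^\xi(v)=f^\xi(\delta^+(v))+g^\xi_v$ for all $v\in V_+,\xi$; $f^\xi_{(u,v)}\le\frac{C}{2}\bar x_{\{u,v\}}$ for all $(u,v)\in A,\xi$; $g^\xi_v\le Cy^\xi_v$ for all $v,\xi$. *)

theory Defs
  imports Complex_Main
begin

text \<open>Conventions: customers V+ = {1..n}, depot 0, V = {0..n}.
  Undirected edges are 2-element sets; arcs are ordered pairs.
  Scenarios [N] = {1..N}. Vectors indexed by scenarios/vertices are functions.\<close>

definition cust :: "nat \<Rightarrow> nat set" where
  "cust n = {1..n}"

definition verts :: "nat \<Rightarrow> nat set" where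
  "verts n = {0..n}"

definition edges :: "nat \<Rightarrow> nat set set" where
  "edges n = {{u, v} | u v. u \<in> verts n \<and> v \<in> verts n \<and> u \<noteq> v}"

definition arcs :: "nat \<Rightarrow> (nat \<times> nat) set" where
  "arcs n = {(u, v). u \<in> verts n \<and> v \<in> verts n \<and> u \<noteq> v}"

definition arcs_in :: "nat \<Rightarrow> nat \<Rightarrow> (nat \<times> nat) set" where
  "arcs_in n v = {a \<in> arcs n. snd a = v}"

definition arcs_out :: "nat \<Rightarrow> nat \<Rightarrow> (nat \<times> nat) set" where
  "arcs_out n v = {a \<in> arcs n. fst a = v}"

definition cut_edges :: "nat \<Rightarrow> nat set \<Rightarrow> nat set set" where
  "cut_edges n S = {e \<in> edges n. card (e \<inter> S) = 1}"

definition inner_edges :: "nat \<Rightarrow> nat set \<Rightarrow> nat set set" where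
  "inner_edges n S = {e \<in> edges n. e \<subseteq> S}"

definition Xsub :: "nat \<Rightarrow> (nat set \<Rightarrow> real) set" where
  "Xsub n = {x. (\<forall>e \<in> edges n. 0 \<le> x e \<and> x e \<le> 2)
     \<and> (\<forall>v \<in> cust n. (\<Sum>e \<in> cut_edges n {v}. x e) = 2)
     \<and> (\<forall>S. S \<noteq> {} \<and> S \<subseteq> cust n \<longrightarrow>
           (\<Sum>e \<in> inner_edges n S. x e) \<le> real (card S) - 1)}"

definition dbar :: "nat \<Rightarrow> (nat \<Rightarrow> real) \<Rightarrow> (nat \<Rightarrow> nat \<Rightarrow> real) \<Rightarrow> nat \<Rightarrow> real" where
  "dbar N p d v = (\<Sum>\<xi> \<in> {1..N}. p \<xi> * d \<xi> v)"

definition Xcvrp :: "nat \<Rightarrow> real \<Rightarrow> nat \<Rightarrow> nat \<Rightarrow> (nat \<Rightarrow> real) \<Rightarrow> (nat \<Rightarrow> nat \<Rightarrow> real)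
    \<Rightarrow> (nat set \<Rightarrow> real) set" where
  "Xcvrp n C k N p d = Xsub n \<inter> {x.
       (\<Sum>e \<in> cut_edges n {0}. x e) = 2 * real k
     \<and> (\<forall>S. S \<noteq> {} \<and> S \<subseteq> cust n \<longrightarrow>
           (\<Sum>e \<in> inner_edges n S. x e)
             \<le> real (card S) - of_int \<lceil>(\<Sum>v \<in> S. dbar N p d v) / C\<rceil>)}"

text \<open>The box [0,b]^N (only the coordinates in [N] x V+ matter).\<close>
definition box :: "nat \<Rightarrow> nat \<Rightarrow> (nat \<Rightarrow> int) \<Rightarrow> (nat \<Rightarrow> nat \<Rightarrow> real) set" where
  "box n N b = {y. \<forall>\<xi> \<in> {1..N}. \<forall>v \<in> cust n. 0 \<le> y \<xi> v \<and> y \<xi> v \<le> of_int (b v)}"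

definition FLOW :: "nat \<Rightarrow> nat \<Rightarrow> real \<Rightarrow> (nat \<Rightarrow> nat \<Rightarrow> real) \<Rightarrow> (nat \<Rightarrow> int)
    \<Rightarrow> (nat set \<Rightarrow> real) \<Rightarrow> (nat \<Rightarrow> nat \<Rightarrow> real) set" where
  "FLOW n N C d b x = {y \<in> box n N b. \<exists>(f :: nat \<Rightarrow> nat \<times> nat \<Rightarrow> real) (g :: nat \<Rightarrow> nat \<Rightarrow> real).
      (\<forall>\<xi> \<in> {1..N}.
         (\<forall>a \<in> arcs n. 0 \<le> f \<xi> a \<and> f \<xi> a \<le> C / 2 * x {fst a, snd a})
       \<and> (\<forall>v \<in> cust n. 0 \<le> g \<xi> v \<and> g \<xi> v \<le> C * y \<xi> v
           \<and> (\<Sum>a \<in> arcs_in n v. f \<xi> a) + d \<xi> v = (\<Sum>a \<in> arcs_out n v. f \<xi> a) + g \<xi> v))}"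

definition CUTSET :: "nat \<Rightarrow> nat \<Rightarrow> real \<Rightarrow> (nat \<Rightarrow> nat \<Rightarrow> real) \<Rightarrow> (nat \<Rightarrow> int)
    \<Rightarrow> (nat set \<Rightarrow> real) \<Rightarrow> (nat \<Rightarrow> nat \<Rightarrow> real) set" where
  "CUTSET n N C d b x = {y \<in> box n N b. \<forall>S. S \<noteq> {} \<and> S \<subseteq> cust n \<longrightarrow> (\<forall>\<xi> \<in> {1..N}.
      (\<Sum>v \<in> S. y \<xi> v) \<ge> (\<Sum>v \<in> S. d \<xi> v) / C + (\<Sum>e \<in> inner_edges n S. x e) - real (card S))}"

end

theory Submission
  imports Defs "HOL-Analysis.Analysis"
begin

(* Fix a scenario.  FLOW asks for a single-commodity flow in which every customer v supplies
   d(v), may discharge up to C y(v) on the spot, each arc carries at most C/2 x_e, and the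
   depot is free.  By Gale's supply-demand theorem such a flow exists iff, for every
   customer set S, the supply d(S) is at most the local capacity C y(S) plus the capacity of
   the arcs leaving S; the degree equations x(delta(v)) = 2 turn the latter into
   C (|S| - x(E(S))), which is exactly the cut inequality.  Gale's theorem is proved by
   minimising the squared excess over the compact box of capacity-respecting flows: at a
   minimiser, the customers of maximal (minimal) excess saturate (empty) all arcs across their
   boundary, which contradicts the cut condition (nonnegativity of d) unless every excess is 0.
   Besides x >= 0 only the degree equations of the polytope are used. *)

lemma slope_nonneg_if_quadratic_nonneg:
  fixes G Q s :: real
  assumes "0 \<le> Q" "0 < s" and nonneg: "\<And>t. 0 < t \<Longrightarrow> t \<le> s \<Longrightarrow> 0 \<le> 2 * t * G + t\<^sup>2 * Q"
  shows "0 \<le> G"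
proof (rule ccontr)
  assume "\<not> 0 \<le> G"
  define t where "t = min s (- G / (Q + 1))"
  have "0 < Q + 1" using \<open>0 \<le> Q\<close> by simp
  then have t: "0 < t" "t \<le> s" "t * (Q + 1) \<le> - G"
    using assms \<open>\<not> 0 \<le> G\<close> by (auto simp: t_def min_mult_distrib_right pos_le_divide_eq divide_neg_pos)
  then have "t * (t * Q) \<le> t * (- G)"
    by (intro mult_left_mono) (auto simp: algebra_simps)
  then have "2 * t * G + t\<^sup>2 * Q \<le> t * G"
    by (simp add: power2_eq_square algebra_simps)
  also have "\<dots> < 0" using t \<open>\<not> 0 \<le> G\<close> by (simp add: mult_pos_neg)
  finally show False using nonneg[OF t(1,2)] by linarith
qed

lemma compact_box_fun: "compact {h :: 'a \<Rightarrow> real. \<forall>i. 0 \<le> h i \<and> h i \<le> B i}"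
proof -
  have "{h :: 'a \<Rightarrow> real. \<forall>i. 0 \<le> h i \<and> h i \<le> B i} = PiE UNIV (\<lambda>i. {0..B i})"
    by (auto simp: PiE_UNIV_domain Pi_def)
  moreover have "compactin (product_topology (\<lambda>i. euclidean) UNIV) (PiE UNIV (\<lambda>i. {0..B i :: real}))"
    by (simp add: compactin_PiE)
  ultimately show ?thesis by (simp add: euclidean_product_topology)
qed

lemma sum_squares_affine_perturb:
  fixes r :: "'v \<Rightarrow> real" and M :: "'v \<Rightarrow> 'i \<Rightarrow> real"
  assumes "finite I" "i \<in> I"
  shows "(\<Sum>v\<in>W. (r v + (\<Sum>j\<in>I. M v j * (h j + (if j = i then t else 0))))\<^sup>2)
    = (\<Sum>v\<in>W. (r v + (\<Sum>j\<in>I. M v j * h j))\<^sup>2)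
      + 2 * t * (\<Sum>v\<in>W. M v i * (r v + (\<Sum>j\<in>I. M v j * h j)))
      + t\<^sup>2 * (\<Sum>v\<in>W. (M v i)\<^sup>2)"
proof -
  have "(\<Sum>j\<in>I. M v j * (if j = i then t else 0)) = (\<Sum>j\<in>I. if j = i then M v i * t else 0)" for v
    by (rule sum.cong) auto
  then have "(\<Sum>j\<in>I. M v j * (h j + (if j = i then t else 0))) = (\<Sum>j\<in>I. M v j * h j) + t * M v i"
    for v using assms by (simp add: distrib_left sum.distrib)
  then show ?thesis
    by (simp add: power2_eq_square algebra_simps sum.distrib sum_distrib_left)
qed

lemma box_least_squares_kkt:
  fixes r :: "'v \<Rightarrow> real" and M :: "'v \<Rightarrow> 'i \<Rightarrow> real"
  assumes "finite I" and u_nonneg: "\<forall>i\<in>I. 0 \<le> u i"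
  obtains h where "\<forall>i\<in>I. 0 \<le> h i \<and> h i \<le> u i"
    and "\<And>i. i \<in> I \<Longrightarrow> h i < u i \<Longrightarrow> 0 \<le> (\<Sum>v\<in>W. M v i * (r v + (\<Sum>j\<in>I. M v j * h j)))"
    and "\<And>i. i \<in> I \<Longrightarrow> 0 < h i \<Longrightarrow> (\<Sum>v\<in>W. M v i * (r v + (\<Sum>j\<in>I. M v j * h j))) \<le> 0"
proof -
  define \<Phi> where "\<Phi> h = (\<Sum>v\<in>W. (r v + (\<Sum>j\<in>I. M v j * h j))\<^sup>2)" for h
  define B where "B i = (if i \<in> I then u i else 0)" for i
  define K where "K = {h. \<forall>i. 0 \<le> h i \<and> h i \<le> B i}"
  have "compact K" unfolding K_def by (rule compact_box_fun)
  moreover have "(\<lambda>_. 0) \<in> K" using u_nonneg by (simp add: K_def B_def)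
  moreover have "continuous_on K \<Phi>"
    unfolding \<Phi>_def by (intro continuous_intros continuous_on_subset[OF continuous_on_product_coordinates subset_UNIV])
  ultimately obtain h where "h \<in> K" and h_min: "\<And>h'. h' \<in> K \<Longrightarrow> \<Phi> h \<le> \<Phi> h'"
    using continuous_attains_inf[of K \<Phi>] by blast
  then have h_bounds: "0 \<le> h i" "h i \<le> B i" for i by (simp_all add: K_def)
  then have box: "\<forall>i\<in>I. 0 \<le> h i \<and> h i \<le> u i" by (metis B_def)
  define G where "G i = (\<Sum>v\<in>W. M v i * (r v + (\<Sum>j\<in>I. M v j * h j)))" for i
  define Q where "Q i = (\<Sum>v\<in>W. (M v i)\<^sup>2)" for i
  have Q_nonneg: "0 \<le> Q i" for i by (simp add: Q_def sum_nonneg)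
  have move: "0 \<le> 2 * t * G i + t\<^sup>2 * Q i" if "i \<in> I" "0 \<le> h i + t" "h i + t \<le> u i" for i t
  proof -
    have "B i = u i" using that by (simp add: B_def)
    then have "(\<lambda>j. h j + (if j = i then t else 0)) \<in> K"
      using h_bounds that by (auto simp: K_def)
    then have "\<Phi> h \<le> \<Phi> (\<lambda>j. h j + (if j = i then t else 0))" by (rule h_min)
    also have "\<Phi> (\<lambda>j. h j + (if j = i then t else 0)) = \<Phi> h + 2 * t * G i + t\<^sup>2 * Q i"
      unfolding \<Phi>_def G_def Q_def using \<open>finite I\<close> \<open>i \<in> I\<close> by (rule sum_squares_affine_perturb)
    finally show ?thesis by linarith
  qed
  show thesis
  proof (rule that[OF box]; fold G_def)
    fix i assume "i \<in> I" "h i < u i"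
    show "0 \<le> G i"
    proof (rule slope_nonneg_if_quadratic_nonneg[OF Q_nonneg])
      show "0 < u i - h i" using \<open>h i < u i\<close> by simp
      fix t assume "0 < t" "t \<le> u i - h i"
      then show "0 \<le> 2 * t * G i + t\<^sup>2 * Q i" using move[OF \<open>i \<in> I\<close>, of t] box \<open>i \<in> I\<close> by auto
    qed
  next
    fix i assume "i \<in> I" "0 < h i"
    have "0 \<le> - G i"
    proof (rule slope_nonneg_if_quadratic_nonneg[OF Q_nonneg \<open>0 < h i\<close>])
      fix t assume "0 < t" "t \<le> h i"
      then show "0 \<le> 2 * t * - G i + t\<^sup>2 * Q i" using move[OF \<open>i \<in> I\<close>, of "- t"] box \<open>i \<in> I\<close> by auto
    qed
    then show "G i \<le> 0" by simp
  qed
qed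

definition arcs_leaving :: "('a \<times> 'a) set \<Rightarrow> 'a set \<Rightarrow> ('a \<times> 'a) set" where
  "arcs_leaving A S = {a \<in> A. fst a \<in> S \<and> snd a \<notin> S}"

definition arcs_entering :: "('a \<times> 'a) set \<Rightarrow> 'a set \<Rightarrow> ('a \<times> 'a) set" where
  "arcs_entering A S = {a \<in> A. fst a \<notin> S \<and> snd a \<in> S}"

definition excess :: "('a \<times> 'a) set \<Rightarrow> ('a \<Rightarrow> real) \<Rightarrow> ('a \<times> 'a \<Rightarrow> real) \<Rightarrow> ('a \<Rightarrow> real) \<Rightarrow> 'a \<Rightarrow> real"
  where "excess A D f g v = D v + sum f {a \<in> A. snd a = v} - sum f {a \<in> A. fst a = v} - g v"

lemma sum_fibres:
  assumes "finite A" "finite S"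
  shows "(\<Sum>v\<in>S. sum f {a \<in> A. \<phi> a = v}) = sum f {a \<in> A. \<phi> a \<in> S}"
proof -
  have "(\<Sum>v\<in>S. sum f {a \<in> A. \<phi> a = v}) = (\<Sum>v\<in>S. sum f {a. a \<in> {a \<in> A. \<phi> a \<in> S} \<and> \<phi> a = v})"
    by (intro sum.cong refl arg_cong[where f = "sum f"]) auto
  also have "\<dots> = sum f {a \<in> A. \<phi> a \<in> S}"
    using assms by (intro sum.group) auto
  finally show ?thesis .
qed

lemma sum_excess:
  assumes "finite A" "finite S"
  shows "sum (excess A D f g) S
    = sum D S + sum f (arcs_entering A S) - sum f (arcs_leaving A S) - sum g S"
proof -
  define inside where "inside = {a \<in> A. fst a \<in> S \<and> snd a \<in> S}"
  have split_sum: "sum f (B \<union> inside) = sum f B + sum f inside"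
    if "B \<subseteq> A" "B \<inter> inside = {}" for B
    using that \<open>finite A\<close> by (intro sum.union_disjoint) (auto simp: inside_def intro: finite_subset)
  have "{a \<in> A. snd a \<in> S} = arcs_entering A S \<union> inside"
    "{a \<in> A. fst a \<in> S} = arcs_leaving A S \<union> inside"
    by (auto simp: arcs_entering_def arcs_leaving_def inside_def)
  moreover have "arcs_entering A S \<inter> inside = {}" "arcs_leaving A S \<inter> inside = {}"
    "arcs_entering A S \<subseteq> A" "arcs_leaving A S \<subseteq> A"
    by (auto simp: arcs_entering_def arcs_leaving_def inside_def)
  ultimately have "sum f {a \<in> A. snd a \<in> S} - sum f {a \<in> A. fst a \<in> S}
      = sum f (arcs_entering A S) - sum f (arcs_leaving A S)"
    by (simp add: split_sum)
  then show ?thesis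
    using sum_fibres[OF assms, of f snd] sum_fibres[OF assms, of f fst]
    by (simp add: excess_def sum.distrib sum_subtractf)
qed

lemma argmax_level_set:
  fixes E :: "'a \<Rightarrow> real"
  assumes "finite W" "v \<in> W" "0 < E v" and zero_outside: "\<And>w. w \<notin> W \<Longrightarrow> E w = 0"
  obtains m S where "0 < m" "S \<subseteq> W" "S \<noteq> {}" "\<And>w. w \<in> S \<Longrightarrow> E w = m"
    "\<And>w. w \<notin> S \<Longrightarrow> E w < m"
proof
  define m where "m = Max (E ` W)"
  have le_m: "E w \<le> m" if "w \<in> W" for w
    using \<open>finite W\<close> that by (simp add: m_def)
  have "m \<in> E ` W" unfolding m_def using assms by (intro Max_in) auto
  show "0 < m" using le_m[OF \<open>v \<in> W\<close>] \<open>0 < E v\<close> by simp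
  show "{w \<in> W. E w = m} \<subseteq> W" "{w \<in> W. E w = m} \<noteq> {}" using \<open>m \<in> E ` W\<close> by auto
  show "E w = m" if "w \<in> {w \<in> W. E w = m}" for w using that by simp
  show "E w < m" if "w \<notin> {w \<in> W. E w = m}" for w
    using that le_m zero_outside \<open>0 < m\<close> by (cases "w \<in> W") force+
qed

(* Vertices outside W carry no balance constraint; in the optimality conditions below they
   behave as if their excess were 0. *)
lemma excess_nonpos_at_equilibrium:
  fixes A :: "('a \<times> 'a) set" and W :: "'a set" and D c g :: "'a \<Rightarrow> real" and f u :: "'a \<times> 'a \<Rightarrow> real"
  defines "E w \<equiv> if w \<in> W then excess A D f g w else 0"
  assumes "finite A" "finite W"
    and cut: "\<And>S. S \<noteq> {} \<and> S \<subseteq> W \<Longrightarrow> sum D S \<le> sum c S + sum u (arcs_leaving A S)"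
    and f_nonneg: "\<forall>a\<in>A. 0 \<le> f a" and f_le: "\<forall>a\<in>A. f a \<le> u a" and g_le: "\<forall>w\<in>W. g w \<le> c w"
    and arc_unsaturated: "\<And>a. a \<in> A \<Longrightarrow> f a < u a \<Longrightarrow> E (fst a) \<le> E (snd a)"
    and arc_used: "\<And>a. a \<in> A \<Longrightarrow> 0 < f a \<Longrightarrow> E (snd a) \<le> E (fst a)"
    and sink_unsaturated: "\<And>w. w \<in> W \<Longrightarrow> g w < c w \<Longrightarrow> E w \<le> 0"
    and "v \<in> W"
  shows "excess A D f g v \<le> 0"
proof (rule ccontr)
  assume "\<not> ?thesis"
  then have "0 < E v" using \<open>v \<in> W\<close> by (simp add: E_def)
  moreover have "E w = 0" if "w \<notin> W" for w using that by (simp add: E_def)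
  ultimately obtain m S where "0 < m" "S \<subseteq> W" "S \<noteq> {}" and on_S: "\<And>w. w \<in> S \<Longrightarrow> E w = m"
    and off_S: "\<And>w. w \<notin> S \<Longrightarrow> E w < m"
    using argmax_level_set[OF \<open>finite W\<close> \<open>v \<in> W\<close>] by metis
  have "finite S" using \<open>S \<subseteq> W\<close> \<open>finite W\<close> by (rule finite_subset)
  have "f a = u a" if "a \<in> arcs_leaving A S" for a
  proof -
    have "a \<in> A" "E (snd a) < E (fst a)"
      using that on_S off_S by (auto simp: arcs_leaving_def)
    then show ?thesis using arc_unsaturated[of a] f_le by force
  qed
  then have leaving: "sum f (arcs_leaving A S) = sum u (arcs_leaving A S)" by simp
  have "f a = 0" if "a \<in> arcs_entering A S" for a
  proof -
    have "a \<in> A" "E (fst a) < E (snd a)"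
      using that on_S off_S by (auto simp: arcs_entering_def)
    then show ?thesis using arc_used[of a] f_nonneg by force
  qed
  then have entering: "sum f (arcs_entering A S) = 0" by simp
  have "g w = c w" if "w \<in> S" for w
    using that sink_unsaturated[of w] g_le on_S[OF that] \<open>0 < m\<close> \<open>S \<subseteq> W\<close> by force
  then have sinks: "sum g S = sum c S" by simp
  have "0 < m * card S" using \<open>0 < m\<close> \<open>finite S\<close> \<open>S \<noteq> {}\<close> by (simp add: card_gt_0_iff)
  also have "m * card S = sum (excess A D f g) S"
    using on_S \<open>S \<subseteq> W\<close> by (simp add: E_def subset_iff)
  also have "\<dots> = sum D S - sum u (arcs_leaving A S) - sum c S"
    using sum_excess[OF \<open>finite A\<close> \<open>finite S\<close>] leaving entering sinks by simp
  finally show False using cut[of S] \<open>S \<noteq> {}\<close> \<open>S \<subseteq> W\<close> by simp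
qed

lemma excess_nonneg_at_equilibrium:
  fixes A :: "('a \<times> 'a) set" and W :: "'a set" and D g :: "'a \<Rightarrow> real" and f :: "'a \<times> 'a \<Rightarrow> real"
  defines "E w \<equiv> if w \<in> W then excess A D f g w else 0"
  assumes "finite A" "finite W"
    and D_nonneg: "\<forall>w\<in>W. 0 \<le> D w" and f_nonneg: "\<forall>a\<in>A. 0 \<le> f a" and g_nonneg: "\<forall>w\<in>W. 0 \<le> g w"
    and arc_used: "\<And>a. a \<in> A \<Longrightarrow> 0 < f a \<Longrightarrow> E (snd a) \<le> E (fst a)"
    and sink_used: "\<And>w. w \<in> W \<Longrightarrow> 0 < g w \<Longrightarrow> 0 \<le> E w"
    and "v \<in> W"
  shows "0 \<le> excess A D f g v"
proof (rule ccontr)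
  assume "\<not> ?thesis"
  then have "0 < - E v" using \<open>v \<in> W\<close> by (simp add: E_def)
  moreover have "- E w = 0" if "w \<notin> W" for w using that by (simp add: E_def)
  ultimately obtain m S where "0 < m" "S \<subseteq> W" "S \<noteq> {}" and on_S: "\<And>w. w \<in> S \<Longrightarrow> - E w = m"
    and off_S: "\<And>w. w \<notin> S \<Longrightarrow> - E w < m"
    using argmax_level_set[OF \<open>finite W\<close> \<open>v \<in> W\<close>, of "\<lambda>w. - E w"] by metis
  have "finite S" using \<open>S \<subseteq> W\<close> \<open>finite W\<close> by (rule finite_subset)
  have "f a = 0" if "a \<in> arcs_leaving A S" for a
  proof -
    have "a \<in> A" "fst a \<in> S" "snd a \<notin> S" using that by (auto simp: arcs_leaving_def)
    then have "a \<in> A" "E (fst a) < E (snd a)"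
      using on_S[of "fst a"] off_S[of "snd a"] by auto
    then show ?thesis using arc_used[of a] f_nonneg by force
  qed
  then have leaving: "sum f (arcs_leaving A S) = 0" by simp
  have entering: "0 \<le> sum f (arcs_entering A S)"
    using f_nonneg by (intro sum_nonneg) (simp add: arcs_entering_def)
  have "g w = 0" if "w \<in> S" for w
    using that sink_used[of w] g_nonneg on_S[OF that] \<open>0 < m\<close> \<open>S \<subseteq> W\<close> by force
  then have sinks: "sum g S = 0" by simp
  have "0 \<le> sum D S" using D_nonneg \<open>S \<subseteq> W\<close> by (intro sum_nonneg) auto
  also have "\<dots> \<le> sum (excess A D f g) S"
    using sum_excess[OF \<open>finite A\<close> \<open>finite S\<close>] leaving entering sinks by simp
  also have "\<dots> = - (m * card S)"
  proof -
    have "excess A D f g w = - m" if "w \<in> S" for w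
      using on_S[OF that] that \<open>S \<subseteq> W\<close> by (auto simp: E_def)
    then show ?thesis by simp
  qed
  also have "\<dots> < 0" using \<open>0 < m\<close> \<open>finite S\<close> \<open>S \<noteq> {}\<close> by (simp add: card_gt_0_iff)
  finally show False by simp
qed

definition flow_incidence :: "'a \<Rightarrow> ('a \<times> 'a) + 'a \<Rightarrow> real" where
  "flow_incidence w = case_sum (\<lambda>a. of_bool (snd a = w) - of_bool (fst a = w)) (\<lambda>v. - of_bool (v = w))"

lemma flow_incidence_residual:
  assumes "finite A" "finite W" "w \<in> W"
  shows "D w + (\<Sum>j\<in>A <+> W. flow_incidence w j * h j) = excess A D (\<lambda>a. h (Inl a)) (\<lambda>v. h (Inr v)) w"
proof -
  have "(\<Sum>j\<in>A <+> W. flow_incidence w j * h j) = (\<Sum>a\<in>A. of_bool (snd a = w) * h (Inl a))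
      - (\<Sum>a\<in>A. of_bool (fst a = w) * h (Inl a)) - (\<Sum>v\<in>W. of_bool (v = w) * h (Inr v))"
    using assms by (simp add: flow_incidence_def sum.Plus left_diff_distrib sum_subtractf sum_negf)
  also have "\<dots> = sum (\<lambda>a. h (Inl a)) {a \<in> A. snd a = w} - sum (\<lambda>a. h (Inl a)) {a \<in> A. fst a = w} - h (Inr w)"
    using assms by (simp add: Collect_conj_eq Int_commute)
  finally show ?thesis by (simp add: excess_def)
qed

lemma sum_flow_incidence:
  assumes "finite W"
  shows "(\<Sum>w\<in>W. flow_incidence w (Inl a) * \<phi> w)
      = (if snd a \<in> W then \<phi> (snd a) else 0) - (if fst a \<in> W then \<phi> (fst a) else 0)"
    and "(\<Sum>w\<in>W. flow_incidence w (Inr v) * \<phi> w) = - (if v \<in> W then \<phi> v else 0)"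
  using assms by (simp_all add: flow_incidence_def left_diff_distrib sum_subtractf sum_negf if_distrib)

(* Arc flows and discharges form one vector indexed by A <+> W; the excesses are its affine
   image under flow_incidence, so box_least_squares_kkt applies to them. *)

lemma feasible_flow_exists:
  fixes A :: "('a \<times> 'a) set" and W :: "'a set" and D c :: "'a \<Rightarrow> real" and u :: "'a \<times> 'a \<Rightarrow> real"
  assumes "finite A" "finite W"
    and u_nonneg: "\<forall>a\<in>A. 0 \<le> u a" and c_nonneg: "\<forall>w\<in>W. 0 \<le> c w" and D_nonneg: "\<forall>w\<in>W. 0 \<le> D w"
    and cut: "\<And>S. S \<noteq> {} \<and> S \<subseteq> W \<Longrightarrow> sum D S \<le> sum c S + sum u (arcs_leaving A S)"
  obtains f g where "\<forall>a\<in>A. 0 \<le> f a \<and> f a \<le> u a" "\<forall>w\<in>W. 0 \<le> g w \<and> g w \<le> c w"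
    "\<forall>w\<in>W. excess A D f g w = 0"
proof -
  let ?I = "A <+> W" and ?M = flow_incidence
  have "finite ?I" "\<forall>i\<in>?I. 0 \<le> case_sum u c i" using assms by auto
  then obtain h where box: "\<forall>i\<in>?I. 0 \<le> h i \<and> h i \<le> case_sum u c i"
    and up: "\<And>i. i \<in> ?I \<Longrightarrow> h i < case_sum u c i \<Longrightarrow> 0 \<le> (\<Sum>w\<in>W. ?M w i * (D w + (\<Sum>j\<in>?I. ?M w j * h j)))"
    and down: "\<And>i. i \<in> ?I \<Longrightarrow> 0 < h i \<Longrightarrow> (\<Sum>w\<in>W. ?M w i * (D w + (\<Sum>j\<in>?I. ?M w j * h j))) \<le> 0"
    by (rule box_least_squares_kkt[where W = W and r = D and M = ?M]) blast
  define f where "f = (\<lambda>a. h (Inl a))"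
  define g where "g = (\<lambda>v. h (Inr v))"
  define E where "E w = (if w \<in> W then excess A D f g w else 0)" for w
  have in_I: "Inl a \<in> ?I \<longleftrightarrow> a \<in> A" "Inr v \<in> ?I \<longleftrightarrow> v \<in> W" for a v by auto
  have gradient: "(\<Sum>w\<in>W. ?M w i * (D w + (\<Sum>j\<in>?I. ?M w j * h j))) = (\<Sum>w\<in>W. ?M w i * excess A D f g w)"
    for i using flow_incidence_residual[OF \<open>finite A\<close> \<open>finite W\<close>, where h = h, folded f_def g_def]
    by (intro sum.cong) simp_all
  have gradient_arc: "(\<Sum>w\<in>W. ?M w (Inl a) * (D w + (\<Sum>j\<in>?I. ?M w j * h j))) = E (snd a) - E (fst a)"
    and gradient_sink: "(\<Sum>w\<in>W. ?M w (Inr v) * (D w + (\<Sum>j\<in>?I. ?M w j * h j))) = - E v" for a v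
    unfolding gradient sum_flow_incidence[OF \<open>finite W\<close>] E_def by simp_all
  have f_box: "\<forall>a\<in>A. 0 \<le> f a \<and> f a \<le> u a" and g_box: "\<forall>w\<in>W. 0 \<le> g w \<and> g w \<le> c w"
    using box[rule_format, of "Inl _"] box[rule_format, of "Inr _"] by (simp_all add: in_I f_def g_def)
  moreover have "excess A D f g w = 0" if "w \<in> W" for w
  proof (rule antisym)
    show "excess A D f g w \<le> 0"
    proof (rule excess_nonpos_at_equilibrium[where A = A and W = W and D = D and f = f and g = g,
          folded E_def, OF \<open>finite A\<close> \<open>finite W\<close> cut _ _ _ _ _ _ that])
      show "\<forall>a\<in>A. 0 \<le> f a" "\<forall>a\<in>A. f a \<le> u a" "\<forall>w\<in>W. g w \<le> c w"
        using f_box g_box by auto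
      show "E (fst a) \<le> E (snd a)" if "a \<in> A" "f a < u a" for a
        using up[of "Inl a"] that gradient_arc[of a] by (simp add: in_I f_def)
      show "E (snd a) \<le> E (fst a)" if "a \<in> A" "0 < f a" for a
        using down[of "Inl a"] that gradient_arc[of a] by (simp add: in_I f_def)
      show "E v \<le> 0" if "v \<in> W" "g v < c v" for v
        using up[of "Inr v"] that gradient_sink[of v] by (simp add: in_I g_def)
    qed simp
    show "0 \<le> excess A D f g w"
    proof (rule excess_nonneg_at_equilibrium[where A = A and W = W and D = D and f = f and g = g,
          folded E_def, OF \<open>finite A\<close> \<open>finite W\<close> D_nonneg _ _ _ _ that])
      show "\<forall>a\<in>A. 0 \<le> f a" "\<forall>w\<in>W. 0 \<le> g w"
        using f_box g_box by auto
      show "E (snd a) \<le> E (fst a)" if "a \<in> A" "0 < f a" for a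
        using down[of "Inl a"] that gradient_arc[of a] by (simp add: in_I f_def)
      show "0 \<le> E v" if "v \<in> W" "0 < g v" for v
        using down[of "Inr v"] that gradient_sink[of v] by (simp add: in_I g_def)
    qed
  qed
  ultimately show thesis using that by blast
qed

theorem feasible_flow_iff_cut_condition:
  fixes A :: "('a \<times> 'a) set" and W :: "'a set" and D c :: "'a \<Rightarrow> real" and u :: "'a \<times> 'a \<Rightarrow> real"
  assumes "finite A" "finite W"
    and "\<forall>a\<in>A. 0 \<le> u a" "\<forall>w\<in>W. 0 \<le> c w" "\<forall>w\<in>W. 0 \<le> D w"
  shows "(\<exists>f g. (\<forall>a\<in>A. 0 \<le> f a \<and> f a \<le> u a) \<and> (\<forall>w\<in>W. 0 \<le> g w \<and> g w \<le> c w
            \<and> sum f {a \<in> A. snd a = w} + D w = sum f {a \<in> A. fst a = w} + g w))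
    \<longleftrightarrow> (\<forall>S. S \<noteq> {} \<and> S \<subseteq> W \<longrightarrow> sum D S \<le> sum c S + sum u (arcs_leaving A S))"
    (is "(\<exists>f g. ?flow f g) \<longleftrightarrow> ?cut")
proof
  assume "\<exists>f g. ?flow f g"
  then obtain f g where f_box: "\<forall>a\<in>A. 0 \<le> f a \<and> f a \<le> u a" and g_box: "\<forall>w\<in>W. g w \<le> c w"
    and balanced: "\<forall>w\<in>W. excess A D f g w = 0"
    by (fastforce simp: excess_def)
  show ?cut
  proof (intro allI impI)
    fix S assume S: "S \<noteq> {} \<and> S \<subseteq> W"
    then have "finite S" using \<open>finite W\<close> finite_subset by blast
    have "sum (excess A D f g) S = 0" using balanced S by (simp add: subset_iff)
    then have "sum D S = sum g S - sum f (arcs_entering A S) + sum f (arcs_leaving A S)"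
      using sum_excess[OF \<open>finite A\<close> \<open>finite S\<close>] by simp
    also have "\<dots> \<le> sum c S + sum u (arcs_leaving A S)"
    proof -
      have "sum g S \<le> sum c S" using g_box S by (intro sum_mono) auto
      moreover have "0 \<le> sum f (arcs_entering A S)"
        using f_box by (intro sum_nonneg) (simp add: arcs_entering_def)
      moreover have "sum f (arcs_leaving A S) \<le> sum u (arcs_leaving A S)"
        using f_box by (intro sum_mono) (simp add: arcs_leaving_def)
      ultimately show ?thesis by linarith
    qed
    finally show "sum D S \<le> sum c S + sum u (arcs_leaving A S)" .
  qed
next
  assume ?cut
  then obtain f g where "\<forall>a\<in>A. 0 \<le> f a \<and> f a \<le> u a" "\<forall>w\<in>W. 0 \<le> g w \<and> g w \<le> c w"
    "\<forall>w\<in>W. excess A D f g w = 0"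
    using feasible_flow_exists[OF assms] by metis
  then have "?flow f g" by (simp add: excess_def algebra_simps)
  then show "\<exists>f g. ?flow f g" by blast
qed

lemma finite_arcs: "finite (arcs n)"
  by (rule finite_subset[of _ "verts n \<times> verts n"]) (auto simp: arcs_def verts_def)

lemma sum_arcs_out_eq_sum_cut_edges:
  assumes "v \<in> verts n"
  shows "(\<Sum>a\<in>arcs_out n v. w {fst a, snd a}) = sum w (cut_edges n {v})"
proof -
  have "inj_on (\<lambda>a. {fst a, snd a}) (arcs_out n v)"
    by (auto simp: inj_on_def arcs_out_def arcs_def doubleton_eq_iff prod_eq_iff)
  moreover have "(\<lambda>a. {fst a, snd a}) ` arcs_out n v = cut_edges n {v}"
  proof -
    have "card (e \<inter> {v}) = 1 \<longleftrightarrow> v \<in> e" for e :: "nat set"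
      by (cases "v \<in> e") auto
    then have "cut_edges n {v} = (\<lambda>q. {v, q}) ` {q \<in> verts n. q \<noteq> v}"
      using assms by (auto simp: cut_edges_def edges_def insert_commute)
    moreover have "arcs_out n v = Pair v ` {q \<in> verts n. q \<noteq> v}"
      using assms by (auto simp: arcs_out_def arcs_def)
    ultimately show ?thesis by (simp add: image_image)
  qed
  ultimately show ?thesis by (metis (no_types, lifting) sum.reindex_cong)
qed

lemma edge_of_arc: "a \<in> arcs n \<Longrightarrow> {fst a, snd a} \<in> edges n"
  unfolding arcs_def edges_def by (cases a) auto

lemma sum_arcs_inside_eq_sum_inner_edges:
  fixes w :: "nat set \<Rightarrow> real"
  assumes "S \<subseteq> verts n"
  shows "(\<Sum>a\<in>{a \<in> arcs n. fst a \<in> S \<and> snd a \<in> S}. w {fst a, snd a}) = 2 * sum w (inner_edges n S)"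
proof -
  define inside where "inside = {a \<in> arcs n. fst a \<in> S \<and> snd a \<in> S}"
  have "finite inside" using finite_arcs by (simp add: inside_def)
  moreover have "finite (inner_edges n S)"
    by (rule finite_subset[of _ "Pow (verts n)"]) (auto simp: inner_edges_def edges_def verts_def)
  moreover have "(\<lambda>a. {fst a, snd a}) ` inside \<subseteq> inner_edges n S"
    using edge_of_arc unfolding inside_def inner_edges_def by fastforce
  ultimately have "(\<Sum>a\<in>inside. w {fst a, snd a})
      = (\<Sum>e\<in>inner_edges n S. \<Sum>a\<in>{a. a \<in> inside \<and> {fst a, snd a} = e}. w {fst a, snd a})"
    by (rule sum.group[symmetric])
  also have "\<dots> = (\<Sum>e\<in>inner_edges n S. 2 * w e)"
  proof (rule sum.cong[OF refl])
    fix e assume "e \<in> inner_edges n S"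
    then obtain p q where "e = {p, q}" "p \<noteq> q" "p \<in> S" "q \<in> S"
      by (auto simp: inner_edges_def edges_def)
    moreover have "{a. a \<in> inside \<and> {fst a, snd a} = {p, q}} = {(p, q), (q, p)}"
      using \<open>p \<noteq> q\<close> \<open>p \<in> S\<close> \<open>q \<in> S\<close> assms
      by (auto simp: inside_def arcs_def doubleton_eq_iff)
    ultimately show "(\<Sum>a\<in>{a. a \<in> inside \<and> {fst a, snd a} = e}. w {fst a, snd a}) = 2 * w e"
      by (simp add: insert_commute)
  qed
  finally show ?thesis by (simp add: inside_def sum_distrib_left)
qed

lemma Xsub_nonneg: "x \<in> Xsub n \<Longrightarrow> a \<in> arcs n \<Longrightarrow> 0 \<le> x {fst a, snd a}"
  using edge_of_arc by (auto simp: Xsub_def)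

lemma Xsub_sum_arcs_leaving:
  assumes "x \<in> Xsub n" "S \<subseteq> cust n"
  shows "(\<Sum>a\<in>arcs_leaving (arcs n) S. x {fst a, snd a})
    = 2 * real (card S) - 2 * sum x (inner_edges n S)"
proof -
  define inside where "inside = {a \<in> arcs n. fst a \<in> S \<and> snd a \<in> S}"
  have S: "finite S" "S \<subseteq> verts n" using assms(2) finite_subset by (auto simp: cust_def verts_def)
  have "{a \<in> arcs n. fst a \<in> S} = arcs_leaving (arcs n) S \<union> inside"
    "arcs_leaving (arcs n) S \<inter> inside = {}"
    by (auto simp: arcs_leaving_def inside_def)
  then have "(\<Sum>a\<in>{a \<in> arcs n. fst a \<in> S}. x {fst a, snd a})
      = (\<Sum>a\<in>arcs_leaving (arcs n) S. x {fst a, snd a}) + (\<Sum>a\<in>inside. x {fst a, snd a})"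
    using finite_arcs by (simp add: sum.union_disjoint arcs_leaving_def inside_def)
  moreover have "(\<Sum>a\<in>{a \<in> arcs n. fst a \<in> S}. x {fst a, snd a}) = (\<Sum>v\<in>S. 2)"
  proof -
    have "(\<Sum>a\<in>{a \<in> arcs n. fst a \<in> S}. x {fst a, snd a}) = (\<Sum>v\<in>S. \<Sum>a\<in>arcs_out n v. x {fst a, snd a})"
      unfolding arcs_out_def
      by (rule sum_fibres[OF finite_arcs \<open>finite S\<close>, where f = "\<lambda>a. x {fst a, snd a}" and \<phi> = fst, symmetric])
    also have "\<dots> = (\<Sum>v\<in>S. 2)"
    proof (rule sum.cong[OF refl])
      fix v assume "v \<in> S"
      then have "v \<in> cust n" "v \<in> verts n" using assms(2) S(2) by auto
      then show "(\<Sum>a\<in>arcs_out n v. x {fst a, snd a}) = 2"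
        using assms(1) by (simp add: sum_arcs_out_eq_sum_cut_edges Xsub_def)
    qed
    finally show ?thesis .
  qed
  moreover have "(\<Sum>a\<in>inside. x {fst a, snd a}) = 2 * sum x (inner_edges n S)"
    unfolding inside_def using S(2) by (rule sum_arcs_inside_eq_sum_inner_edges)
  ultimately show ?thesis by simp
qed

lemma scenario_flow_iff_cut_inequalities:
  fixes x :: "nat set \<Rightarrow> real" and D y :: "nat \<Rightarrow> real"
  assumes x: "x \<in> Xsub n" and "0 < C"
    and D_nonneg: "\<forall>v\<in>cust n. 0 \<le> D v" and y_nonneg: "\<forall>v\<in>cust n. 0 \<le> y v"
  shows "(\<exists>f g. (\<forall>a\<in>arcs n. 0 \<le> f a \<and> f a \<le> C / 2 * x {fst a, snd a})
      \<and> (\<forall>v\<in>cust n. 0 \<le> g v \<and> g v \<le> C * y v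
          \<and> sum f (arcs_in n v) + D v = sum f (arcs_out n v) + g v))
    \<longleftrightarrow> (\<forall>S. S \<noteq> {} \<and> S \<subseteq> cust n \<longrightarrow>
          sum D S / C + sum x (inner_edges n S) - real (card S) \<le> sum y S)"
    (is "?flow \<longleftrightarrow> ?cut")
proof -
  have cut_iff: "sum D S \<le> (\<Sum>v\<in>S. C * y v) + (\<Sum>a\<in>arcs_leaving (arcs n) S. C / 2 * x {fst a, snd a})
      \<longleftrightarrow> sum D S / C + sum x (inner_edges n S) - real (card S) \<le> sum y S"
    if "S \<subseteq> cust n" for S
  proof -
    let ?X = "sum x (inner_edges n S)" and ?k = "real (card S)"
    have "(\<Sum>a\<in>arcs_leaving (arcs n) S. C / 2 * x {fst a, snd a})
        = C / 2 * (\<Sum>a\<in>arcs_leaving (arcs n) S. x {fst a, snd a})"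
      by (simp add: sum_distrib_left)
    also have "\<dots> = C * (?k - ?X)"
      unfolding Xsub_sum_arcs_leaving[OF x that] by (simp add: algebra_simps)
    finally have capacity: "(\<Sum>a\<in>arcs_leaving (arcs n) S. C / 2 * x {fst a, snd a}) = C * (?k - ?X)" .
    have "sum D S \<le> (\<Sum>v\<in>S. C * y v) + (\<Sum>a\<in>arcs_leaving (arcs n) S. C / 2 * x {fst a, snd a})
        \<longleftrightarrow> sum D S \<le> C * sum y S + C * (?k - ?X)"
      by (simp only: capacity sum_distrib_left)
    also have "\<dots> \<longleftrightarrow> sum D S \<le> (sum y S + ?k - ?X) * C" by (simp add: algebra_simps)
    also have "\<dots> \<longleftrightarrow> sum D S / C \<le> sum y S + ?k - ?X"
      using \<open>0 < C\<close> by (rule pos_divide_le_eq[symmetric])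
    also have "\<dots> \<longleftrightarrow> sum D S / C + ?X - ?k \<le> sum y S" by linarith
    finally show ?thesis .
  qed
  have "finite (cust n)" by (simp add: cust_def)
  moreover have "\<forall>a\<in>arcs n. 0 \<le> C / 2 * x {fst a, snd a}" using Xsub_nonneg[OF x] \<open>0 < C\<close> by simp
  moreover have "\<forall>v\<in>cust n. 0 \<le> C * y v" using y_nonneg \<open>0 < C\<close> by simp
  ultimately have "?flow \<longleftrightarrow> (\<forall>S. S \<noteq> {} \<and> S \<subseteq> cust n \<longrightarrow> sum D S \<le> (\<Sum>v\<in>S. C * y v)
          + (\<Sum>a\<in>arcs_leaving (arcs n) S. C / 2 * x {fst a, snd a}))"
    unfolding arcs_in_def arcs_out_def using D_nonneg by (rule feasible_flow_iff_cut_condition[OF finite_arcs])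
  also have "\<dots> \<longleftrightarrow> ?cut"
    using cut_iff by blast
  finally show ?thesis .
qed

lemma bchoice2_iff: "(\<forall>a\<in>S. \<exists>b c. P a b c) \<longleftrightarrow> (\<exists>f g. \<forall>a\<in>S. P a (f a) (g a))"
  by metis

theorem proposition2:
  fixes n N k :: nat and C :: real and p :: "nat \<Rightarrow> real"
    and d :: "nat \<Rightarrow> nat \<Rightarrow> real" and b :: "nat \<Rightarrow> int" and x :: "nat set \<Rightarrow> real"
  assumes C_pos: "C > 0"
    and d_rat: "\<forall>\<xi> \<in> {1..N}. \<forall>v \<in> cust n. d \<xi> v \<in> \<rat>"
    and d_nonneg: "\<forall>\<xi> \<in> {1..N}. \<forall>v \<in> cust n. 0 \<le> d \<xi> v"
    and d_le_C: "\<forall>\<xi> \<in> {1..N}. \<forall>v \<in> cust n. d \<xi> v \<le> C"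
    and p_nonneg: "\<forall>\<xi> \<in> {1..N}. 0 \<le> p \<xi>"
    and p_sum: "(\<Sum>\<xi> \<in> {1..N}. p \<xi>) = 1"
    and b_nonneg: "\<forall>v \<in> cust n. 0 \<le> b v"
    and x_in: "x \<in> Xsub n \<or> x \<in> Xcvrp n C k N p d"
  shows "FLOW n N C d b x = CUTSET n N C d b x"
proof (intro set_eqI)
  fix y
  have x: "x \<in> Xsub n" using x_in by (auto simp: Xcvrp_def)
  have "y \<in> FLOW n N C d b x \<longleftrightarrow> y \<in> Defs.box n N b \<and> (\<forall>\<xi>\<in>{1..N}. \<exists>f g.
      (\<forall>a\<in>arcs n. 0 \<le> f a \<and> f a \<le> C / 2 * x {fst a, snd a})
      \<and> (\<forall>v\<in>cust n. 0 \<le> g v \<and> g v \<le> C * y \<xi> v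
          \<and> sum f (arcs_in n v) + d \<xi> v = sum f (arcs_out n v) + g v))"
    (is "_ \<longleftrightarrow> _ \<and> (\<forall>\<xi>\<in>_. ?flow \<xi>)")
    unfolding FLOW_def bchoice2_iff by simp
  also have "\<dots> \<longleftrightarrow> y \<in> Defs.box n N b \<and> (\<forall>\<xi>\<in>{1..N}. \<forall>S. S \<noteq> {} \<and> S \<subseteq> cust n \<longrightarrow>
      sum (d \<xi>) S / C + sum x (inner_edges n S) - real (card S) \<le> sum (y \<xi>) S)"
    (is "_ \<longleftrightarrow> _ \<and> (\<forall>\<xi>\<in>_. ?cut \<xi>)")
  proof (rule conj_cong[OF refl], rule ball_cong[OF refl])
    fix \<xi> assume "y \<in> Defs.box n N b" "\<xi> \<in> {1..N}"
    then have "\<forall>v\<in>cust n. 0 \<le> d \<xi> v" "\<forall>v\<in>cust n. 0 \<le> y \<xi> v"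
      using d_nonneg by (auto simp: Defs.box_def)
    then show "?flow \<xi> \<longleftrightarrow> ?cut \<xi>" by (rule scenario_flow_iff_cut_inequalities[OF x C_pos])
  qed
  also have "\<dots> \<longleftrightarrow> y \<in> CUTSET n N C d b x"
    unfolding CUTSET_def by auto
  finally show "y \<in> FLOW n N C d b x \<longleftrightarrow> y \<in> CUTSET n N C d b x" .
qed

end
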